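(* Let $R$ be a commutative multiplicative hyperring with identity, let $\alpha$ be a good endomorphism of $R$, and let $I$ be an $\alpha$-prime hyperideal of $R$. Then the prime radical $\sqrt{I}$ is an $\alpha$-prime hyperideal of $R$.
   Context: A multiplicative hyperring is an abelian group $(R,+)$ with a hyperoperation $\circ:R\times R\to \mathcal P^*(R)$ (nonempty subsets) such that $a\circ(b\circ c)=(a\circ b)\circ c$, $a\circ(b+c)\subseteq a\circ b+a\circ c$, $(b+c)\circ a\subseteq b\circ a+c\circ a$, and $a\circ(-b)=(-a)\circ b=-(a\circ b)$. Products of subsets are unions of elementwise products. Commutative means $a\circ b=b\circ a$. An identity $1$ satisfies $a\in1\circ a$ for all $a$. A hyperideal is a nonempty $I\subseteq R$ closed under subtraction with $r\circ x\subseteq I$ for $r\in R$, $x\in I$. Standing assumption: every hyperideal is a $\mathbf C$-hyperideal, i.e. for every finite product $A=r_1\circ\cdots\circ r_n$, $A\cap I\neq\emptyset$ implies $A\subseteq I$. A prime hyperideal is a proper hyperideal $P$ with $x\circ y\subseteq P\Rightarrow x\in P$ or $y\in P$. The prime radical $\sqrt I$ is the intersection of all prime hyperideals containing $I$, and equals $R$ if there are none. For $\mathbf C$-hyperideals, $\sqrt I=\{r: r^n\subseteq I \text{ for some } n\in\mathbb N\}$, where $r^n=r\circ\cdots\circ r$ ($n$ factors). A good endomorphism $\alpha$ satisfies $\alpha(x+y)=\alpha(x)+\alpha(y)$ and $\alpha(x\circ y)=\alpha(x)\circ\alpha(y)$. A hyperideal $I$ is $\alpha$-prime if for all $x,y$,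 $x\circ y\subseteq I$ implies $x\in I$ or $\alpha(y)\in I$. *)

theory Defs
  imports Main
begin

text \<open>A multiplicative hyperring: the additive abelian group is the type 'a itself
  (class ab_group_add), the hyperoperation is M :: 'a => 'a => 'a set.\<close>

definition setmult :: "('a \<Rightarrow> 'a \<Rightarrow> 'a set) \<Rightarrow> 'a set \<Rightarrow> 'a set \<Rightarrow> 'a set" where
  "setmult M A B = (\<Union>a\<in>A. \<Union>b\<in>B. M a b)"

definition setplus :: "'a::plus set \<Rightarrow> 'a set \<Rightarrow> 'a set" where
  "setplus A B = {a + b | a b. a \<in> A \<and> b \<in> B}"

definition mult_hyperring :: "('a::ab_group_add \<Rightarrow> 'a \<Rightarrow> 'a set) \<Rightarrow> bool" where
  "mult_hyperring M \<longleftrightarrow>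
     (\<forall>a b. M a b \<noteq> {}) \<and>
     (\<forall>a b c. setmult M {a} (M b c) = setmult M (M a b) {c}) \<and>
     (\<forall>a b c. M a (b + c) \<subseteq> setplus (M a b) (M a c)) \<and>
     (\<forall>a b c. M (b + c) a \<subseteq> setplus (M b a) (M c a)) \<and>
     (\<forall>a b. M a (- b) = uminus ` (M a b) \<and> M (- a) b = uminus ` (M a b))"

definition hcomm :: "('a \<Rightarrow> 'a \<Rightarrow> 'a set) \<Rightarrow> bool" where
  "hcomm M \<longleftrightarrow> (\<forall>a b. M a b = M b a)"

definition has_identity :: "('a \<Rightarrow> 'a \<Rightarrow> 'a set) \<Rightarrow> bool" where
  "has_identity M \<longleftrightarrow> (\<exists>e. \<forall>a. a \<in> M e a)"

text \<open>Finite product r1 o ... o rn of a nonempty list (right-nested; equal to any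
  bracketing by associativity).\<close>
fun hprod :: "('a \<Rightarrow> 'a \<Rightarrow> 'a set) \<Rightarrow> 'a list \<Rightarrow> 'a set" where
  "hprod M [] = {}"
| "hprod M [x] = {x}"
| "hprod M (x # y # xs) = setmult M {x} (hprod M (y # xs))"

definition hyperideal :: "('a::ab_group_add \<Rightarrow> 'a \<Rightarrow> 'a set) \<Rightarrow> 'a set \<Rightarrow> bool" where
  "hyperideal M I \<longleftrightarrow> I \<noteq> {} \<and> (\<forall>x\<in>I. \<forall>y\<in>I. x - y \<in> I) \<and>
     (\<forall>r. \<forall>x\<in>I. M r x \<subseteq> I)"

definition C_hyperideal :: "('a::ab_group_add \<Rightarrow> 'a \<Rightarrow> 'a set) \<Rightarrow> 'a set \<Rightarrow> bool" where
  "C_hyperideal M I \<longleftrightarrow> hyperideal M I \<and>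
     (\<forall>rs. rs \<noteq> [] \<longrightarrow> hprod M rs \<inter> I \<noteq> {} \<longrightarrow> hprod M rs \<subseteq> I)"

definition prime_hyperideal :: "('a::ab_group_add \<Rightarrow> 'a \<Rightarrow> 'a set) \<Rightarrow> 'a set \<Rightarrow> bool" where
  "prime_hyperideal M P \<longleftrightarrow> hyperideal M P \<and> P \<noteq> UNIV \<and>
     (\<forall>x y. M x y \<subseteq> P \<longrightarrow> x \<in> P \<or> y \<in> P)"

text \<open>Prime radical: intersection of all prime hyperideals containing I
  (the empty intersection is UNIV = R).\<close>
definition prime_radical :: "('a::ab_group_add \<Rightarrow> 'a \<Rightarrow> 'a set) \<Rightarrow> 'a set \<Rightarrow> 'a set" where
  "prime_radical M I = \<Inter>{P. prime_hyperideal M P \<and> I \<subseteq> P}"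

definition good_endo :: "('a::plus \<Rightarrow> 'a \<Rightarrow> 'a set) \<Rightarrow> ('a \<Rightarrow> 'a) \<Rightarrow> bool" where
  "good_endo M \<alpha> \<longleftrightarrow> (\<forall>x y. \<alpha> (x + y) = \<alpha> x + \<alpha> y) \<and>
     (\<forall>x y. \<alpha> ` (M x y) = M (\<alpha> x) (\<alpha> y))"

definition alpha_prime :: "('a::ab_group_add \<Rightarrow> 'a \<Rightarrow> 'a set) \<Rightarrow> ('a \<Rightarrow> 'a) \<Rightarrow> 'a set \<Rightarrow> bool" where
  "alpha_prime M \<alpha> I \<longleftrightarrow> hyperideal M I \<and>
     (\<forall>x y. M x y \<subseteq> I \<longrightarrow> x \<in> I \<or> \<alpha> y \<in> I)"

end

theory Submission
  imports Defs
begin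

text \<open>An element z lies in every prime hyperideal containing I iff some power of z meets I.
  One direction is primality together with the C-property. For the other, a hyperideal P that is
  maximal (by Zorn) among those containing I and avoiding all powers of z is prime: if
  a \<circ> b \<subseteq> P with a, b \<notin> P, the hyperideals generated by P and a and by P and b both meet
  the powers of z, while their product lies in P.

  Now let x \<circ> y \<subseteq> \<surd>I with x \<notin> \<surd>I. Some power z^k of some z \<in> x \<circ> y meets I, and by
  commutativity z^k \<subseteq> x^k \<circ> y^k, so some a \<circ> b with a \<in> x^k, b \<in> y^k meets I and hence
  lies in I. As x \<notin> \<surd>I we have a \<notin> I, so \<alpha> b \<in> I by \<alpha>-primality; since
  \<alpha> b \<in> (\<alpha> y)^k, this gives \<alpha> y \<in> \<surd>I.\<close>

lemma hyperideal_zero: "hyperideal M J \<Longrightarrow> 0 \<in> J"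
  unfolding hyperideal_def by (metis all_not_in_conv diff_self)

lemma hyperideal_uminus: "hyperideal M J \<Longrightarrow> x \<in> J \<Longrightarrow> - x \<in> J"
  using hyperideal_zero[of M J] unfolding hyperideal_def by (metis diff_0)

lemma hyperideal_add: "hyperideal M J \<Longrightarrow> x \<in> J \<Longrightarrow> y \<in> J \<Longrightarrow> x + y \<in> J"
  using hyperideal_uminus[of M J y] unfolding hyperideal_def by (metis diff_minus_eq_add)

lemma hyperideal_diff: "hyperideal M J \<Longrightarrow> x \<in> J \<Longrightarrow> y \<in> J \<Longrightarrow> x - y \<in> J"
  unfolding hyperideal_def by blast

lemma hyperideal_hmult: "hyperideal M J \<Longrightarrow> x \<in> J \<Longrightarrow> w \<in> M r x \<Longrightarrow> w \<in> J"
  unfolding hyperideal_def by blast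

lemma hyperideal_Inter:
  assumes "\<And>J. J \<in> \<J> \<Longrightarrow> hyperideal M J"
  shows "hyperideal M (\<Inter>\<J>)"
proof -
  have "0 \<in> \<Inter>\<J>"
    using assms hyperideal_zero by blast
  moreover have "x - y \<in> \<Inter>\<J>" if "x \<in> \<Inter>\<J>" "y \<in> \<Inter>\<J>" for x y
    using that assms hyperideal_diff by blast
  moreover have "M r x \<subseteq> \<Inter>\<J>" if "x \<in> \<Inter>\<J>" for r x
    using that assms hyperideal_hmult by blast
  ultimately show ?thesis
    unfolding hyperideal_def by blast
qed

lemma hyperideal_Union_chain:
  assumes "\<C> \<noteq> {}" "chain\<^sub>\<subseteq> \<C>" "\<And>J. J \<in> \<C> \<Longrightarrow> hyperideal M J"
  shows "hyperideal M (\<Union>\<C>)"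
  unfolding hyperideal_def
proof (intro conjI ballI allI subsetI)
  show "\<Union>\<C> \<noteq> {}"
    using assms(1,3) unfolding hyperideal_def by blast
next
  fix x y assume "x \<in> \<Union>\<C>" "y \<in> \<Union>\<C>"
  then obtain X Y where "X \<in> \<C>" "Y \<in> \<C>" "x \<in> X" "y \<in> Y" by blast
  moreover have "X \<subseteq> Y \<or> Y \<subseteq> X"
    using assms(2) \<open>X \<in> \<C>\<close> \<open>Y \<in> \<C>\<close> unfolding chain_subset_def by blast
  ultimately have "x - y \<in> X \<or> x - y \<in> Y"
    using assms(3) hyperideal_diff by blast
  then show "x - y \<in> \<Union>\<C>"
    using \<open>X \<in> \<C>\<close> \<open>Y \<in> \<C>\<close> by blast
next
  fix r x w assume "x \<in> \<Union>\<C>" "w \<in> M r x"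
  then show "w \<in> \<Union>\<C>" using assms(3) hyperideal_hmult by blast
qed

lemma hyperideal_prime_radical: "hyperideal M (prime_radical M I)"
  unfolding prime_radical_def prime_hyperideal_def by (rule hyperideal_Inter) blast

lemma C_hyperideal_hmult_subset:
  assumes "C_hyperideal M J" "M a b \<inter> J \<noteq> {}"
  shows "M a b \<subseteq> J"
proof -
  have "hprod M [a, b] = M a b"
    by (simp add: setmult_def)
  then show ?thesis
    using assms unfolding C_hyperideal_def by (metis list.distinct(1))
qed

lemma alpha_primeD: "alpha_prime M \<alpha> I \<Longrightarrow> M x y \<subseteq> I \<Longrightarrow> x \<in> I \<or> \<alpha> y \<in> I"
  unfolding alpha_prime_def by blast

text \<open>Shifted by one: hpower M z n is the hyperpower z^(n+1).\<close>
fun hpower :: "('a \<Rightarrow> 'a \<Rightarrow> 'a set) \<Rightarrow> 'a \<Rightarrow> nat \<Rightarrow> 'a set" where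
  "hpower M z 0 = {z}"
| "hpower M z (Suc n) = setmult M {z} (hpower M z n)"

lemma mem_hpower_Suc: "w \<in> hpower M z (Suc n) \<longleftrightarrow> (\<exists>u\<in>hpower M z n. w \<in> M z u)"
  by (auto simp: setmult_def)

lemma image_hpower:
  assumes "good_endo M \<alpha>"
  shows "\<alpha> ` hpower M y k = hpower M (\<alpha> y) k"
proof (induction k)
  case (Suc k)
  have "\<alpha> ` hpower M y (Suc k) = (\<Union>u\<in>hpower M y k. M (\<alpha> y) (\<alpha> u))"
    using assms unfolding good_endo_def by (auto simp: setmult_def image_UN)
  also have "\<dots> = hpower M (\<alpha> y) (Suc k)"
    by (simp add: setmult_def Suc.IH[symmetric] image_comp)
  finally show ?case .
qed simp

lemma mem_prime_hyperideal_if_hpower_meets: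
  assumes "prime_hyperideal M P" "C_hyperideal M P"
  shows "hpower M z n \<inter> P \<noteq> {} \<Longrightarrow> z \<in> P"
proof (induction n)
  case (Suc n)
  then obtain u w where "u \<in> hpower M z n" "w \<in> M z u" "w \<in> P"
    unfolding disjoint_iff mem_hpower_Suc by blast
  then have "M z u \<subseteq> P"
    using C_hyperideal_hmult_subset[OF assms(2)] by blast
  then have "z \<in> P \<or> u \<in> P"
    using assms(1) unfolding prime_hyperideal_def by blast
  then show ?case
    using Suc.IH \<open>u \<in> hpower M z n\<close> by blast
qed simp

locale hyperring =
  fixes M :: "'a::ab_group_add \<Rightarrow> 'a \<Rightarrow> 'a set"
  assumes mult_hyperring: "mult_hyperring M"
begin

lemma hmult_nonempty: "M a b \<noteq> {}"
  using mult_hyperring unfolding mult_hyperring_def by simp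

lemma hmult_assoc: "setmult M {a} (M b c) = setmult M (M a b) {c}"
  using mult_hyperring unfolding mult_hyperring_def by (elim conjE) (erule allE)+

lemma hmult_distrib_left: "M (b + c) a \<subseteq> setplus (M b a) (M c a)"
  using mult_hyperring unfolding mult_hyperring_def by (elim conjE) (erule allE)+

lemma hmult_uminus_left: "M (- a) b = uminus ` M a b"
  using mult_hyperring unfolding mult_hyperring_def by simp

lemma mem_hmult_assoc_right:
  assumes "w \<in> M u v" "u \<in> M a b"
  shows "\<exists>e\<in>M b v. w \<in> M a e"
proof -
  have "w \<in> setmult M (M a b) {v}"
    using assms unfolding setmult_def by blast
  then have "w \<in> setmult M {a} (M b v)"
    by (simp only: hmult_assoc)
  then show ?thesis
    unfolding setmult_def by blast
qed

lemma mem_hmult_assoc_left: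
  assumes "w \<in> M a e" "e \<in> M b c"
  shows "\<exists>d\<in>M a b. w \<in> M d c"
proof -
  have "w \<in> setmult M {a} (M b c)"
    using assms unfolding setmult_def by blast
  then have "w \<in> setmult M (M a b) {c}"
    by (simp only: hmult_assoc)
  then show ?thesis
    unfolding setmult_def by blast
qed

lemma hmult_diff_left_subset:
  assumes "hyperideal M P" "M s b \<subseteq> P" "M t b \<subseteq> P"
  shows "M (s - t) b \<subseteq> P"
proof -
  have "M (s - t) b \<subseteq> setplus (M s b) (uminus ` M t b)"
    using hmult_distrib_left[of s "- t" b] by (simp add: hmult_uminus_left)
  also have "\<dots> \<subseteq> P"
    unfolding setplus_def using assms hyperideal_add hyperideal_uminus by blast
  finally show ?thesis .
qed

lemma hpower_hmult:
  "u \<in> hpower M z m \<Longrightarrow> v \<in> hpower M z n \<Longrightarrow> w \<in> M u v \<Longrightarrow> w \<in> hpower M z (Suc (m + n))"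
proof (induction m arbitrary: u w)
  case 0
  then show ?case by (auto simp: setmult_def)
next
  case (Suc m)
  then obtain u' where "u' \<in> hpower M z m" "u \<in> M z u'"
    using mem_hpower_Suc by metis
  then obtain e where "e \<in> M u' v" "w \<in> M z e"
    using mem_hmult_assoc_right Suc.prems(3) by blast
  moreover have "e \<in> hpower M z (Suc (m + n))"
    using Suc.IH[OF \<open>u' \<in> hpower M z m\<close> Suc.prems(2)] \<open>e \<in> M u' v\<close> .
  ultimately show ?case
    unfolding add_Suc mem_hpower_Suc[of w M z] by blast
qed

end

inductive_set adjoin :: "('a::ab_group_add \<Rightarrow> 'a \<Rightarrow> 'a set) \<Rightarrow> 'a set \<Rightarrow> 'a \<Rightarrow> 'a set"
  for M P a where
  base: "p \<in> P \<Longrightarrow> p \<in> adjoin M P a"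
| generator: "a \<in> adjoin M P a"
| diff: "s \<in> adjoin M P a \<Longrightarrow> t \<in> adjoin M P a \<Longrightarrow> s - t \<in> adjoin M P a"
| hmult: "s \<in> adjoin M P a \<Longrightarrow> u \<in> M r s \<Longrightarrow> u \<in> adjoin M P a"

lemma hyperideal_adjoin: "hyperideal M (adjoin M P a)"
  unfolding hyperideal_def by (auto intro: adjoin.intros)

locale comm_hyperring = hyperring +
  assumes hcomm: "hcomm M"
begin

lemma hmult_commute: "M a b = M b a"
  using hcomm unfolding hcomm_def by blast

lemma hpower_of_hmult:
  assumes "z \<in> M x y"
  shows "w \<in> hpower M z k \<Longrightarrow> \<exists>a\<in>hpower M x k. \<exists>b\<in>hpower M y k. w \<in> M a b"
proof (induction k arbitrary: w)
  case 0
  then show ?case using assms by auto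
next
  case (Suc k)
  then obtain w' where "w' \<in> hpower M z k" "w \<in> M z w'"
    using mem_hpower_Suc by metis
  then obtain a b where ab: "a \<in> hpower M x k" "b \<in> hpower M y k" "w' \<in> M a b"
    using Suc.IH by blast
  \<comment> \<open>regroup z (a b) = ((x y) a) b = (x (y a)) b = ((x a) y) b = (x a) (y b)\<close>
  obtain c where c: "c \<in> M z a" "w \<in> M c b"
    using mem_hmult_assoc_left \<open>w \<in> M z w'\<close> ab(3) by blast
  obtain e where e: "e \<in> M y a" "c \<in> M x e"
    using mem_hmult_assoc_right c(1) assms by blast
  obtain d where d: "d \<in> M x a" "c \<in> M d y"
    using mem_hmult_assoc_left e(2) e(1)[unfolded hmult_commute[of y]] by blast
  obtain f where f: "f \<in> M y b" "w \<in> M d f"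
    using mem_hmult_assoc_right c(2) d(2) by blast
  have "d \<in> hpower M x (Suc k)" "f \<in> hpower M y (Suc k)"
    using d(1) f(1) ab(1,2) unfolding mem_hpower_Suc by blast+
  then show ?case
    using f(2) by blast
qed

lemma adjoin_hmult_subset_left:
  assumes "hyperideal M P" "M a b \<subseteq> P"
  shows "s \<in> adjoin M P a \<Longrightarrow> M s b \<subseteq> P"
proof (induction rule: adjoin.induct)
  case (base p)
  then show ?case
    using hyperideal_hmult[OF assms(1)] hmult_commute by blast
next
  case generator
  then show ?case using assms(2) .
next
  case (diff s t)
  then show ?case using hmult_diff_left_subset[OF assms(1)] by blast
next
  case (hmult s u r)
  show ?case
  proof
    fix w assume "w \<in> M u b"
    then obtain e where "e \<in> M s b" "w \<in> M r e"
      using mem_hmult_assoc_right hmult.hyps(2) by blast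
    then show "w \<in> P"
      using hmult.IH hyperideal_hmult[OF assms(1)] by blast
  qed
qed

lemma adjoin_hmult_subset:
  assumes "hyperideal M P" "M a b \<subseteq> P" "s \<in> adjoin M P a" "t \<in> adjoin M P b"
  shows "M s t \<subseteq> P"
proof -
  have "M b s \<subseteq> P"
    using adjoin_hmult_subset_left[OF assms(1,2,3)] hmult_commute by simp
  then show ?thesis
    using adjoin_hmult_subset_left[OF assms(1) _ assms(4)] hmult_commute by simp
qed

lemma prime_if_maximal_avoiding_hpowers:
  assumes "hyperideal M P" "\<forall>n. hpower M z n \<inter> P = {}"
    and maximal: "\<And>J. hyperideal M J \<Longrightarrow> P \<subseteq> J \<Longrightarrow> \<forall>n. hpower M z n \<inter> J = {} \<Longrightarrow> J = P"
  shows "prime_hyperideal M P"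
  unfolding prime_hyperideal_def
proof (intro conjI allI impI assms(1))
  show "P \<noteq> UNIV"
    using assms(2)[rule_format, of 0] by auto
next
  fix a b assume ab: "M a b \<subseteq> P"
  have meets: "\<exists>n u. u \<in> hpower M z n \<and> u \<in> adjoin M P c" if "c \<notin> P" for c
    using maximal[OF hyperideal_adjoin[of M P c]] that adjoin.base adjoin.generator by blast
  show "a \<in> P \<or> b \<in> P"
  proof (rule ccontr)
    assume "\<not> (a \<in> P \<or> b \<in> P)"
    then obtain m u n v where uv: "u \<in> hpower M z m" "u \<in> adjoin M P a"
      "v \<in> hpower M z n" "v \<in> adjoin M P b"
      using meets by metis
    obtain w where "w \<in> M u v"
      using hmult_nonempty by blast
    then show False
      using adjoin_hmult_subset[OF assms(1) ab uv(2,4)] hpower_hmult[OF uv(1,3)] assms(2) by blast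
  qed
qed

lemma exists_prime_avoiding_hpowers:
  assumes "hyperideal M I" "\<forall>n. hpower M z n \<inter> I = {}"
  shows "\<exists>P. prime_hyperideal M P \<and> I \<subseteq> P \<and> z \<notin> P"
proof -
  define \<F> where "\<F> = {J. hyperideal M J \<and> I \<subseteq> J \<and> (\<forall>n. hpower M z n \<inter> J = {})}"
  have "\<Union>\<C> \<in> \<F>" if "\<C> \<noteq> {}" "subset.chain \<F> \<C>" for \<C>
  proof -
    have "\<C> \<subseteq> \<F>" "chain\<^sub>\<subseteq> \<C>"
      using that(2) unfolding subset_chain_def chain_subset_def by blast+
    then show ?thesis
      using hyperideal_Union_chain[OF that(1)] that(1) unfolding \<F>_def by blast
  qed
  moreover have "I \<in> \<F>"
    using assms unfolding \<F>_def by blast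
  ultimately obtain P where "P \<in> \<F>" and maximal: "\<forall>J\<in>\<F>. P \<subseteq> J \<longrightarrow> J = P"
    using subset_Zorn_nonempty[of \<F>] by blast
  then have "hyperideal M P" "I \<subseteq> P" and avoids: "\<forall>n. hpower M z n \<inter> P = {}"
    unfolding \<F>_def by blast+
  have "prime_hyperideal M P"
  proof (rule prime_if_maximal_avoiding_hpowers[OF \<open>hyperideal M P\<close> avoids])
    fix J assume "hyperideal M J" "P \<subseteq> J" "\<forall>n. hpower M z n \<inter> J = {}"
    then have "J \<in> \<F>"
      using \<open>I \<subseteq> P\<close> unfolding \<F>_def by blast
    then show "J = P"
      using maximal \<open>P \<subseteq> J\<close> by blast
  qed
  moreover have "z \<notin> P"
    using avoids[rule_format, of 0] by auto
  ultimately show ?thesis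
    using \<open>I \<subseteq> P\<close> by blast
qed

lemma mem_prime_radical_iff:
  assumes "hyperideal M I" "\<forall>J. hyperideal M J \<longrightarrow> C_hyperideal M J"
  shows "z \<in> prime_radical M I \<longleftrightarrow> (\<exists>k. hpower M z k \<inter> I \<noteq> {})"
proof
  assume "z \<in> prime_radical M I"
  then show "\<exists>k. hpower M z k \<inter> I \<noteq> {}"
    using exists_prime_avoiding_hpowers[OF assms(1)] unfolding prime_radical_def by blast
next
  assume "\<exists>k. hpower M z k \<inter> I \<noteq> {}"
  then show "z \<in> prime_radical M I"
    using mem_prime_hyperideal_if_hpower_meets assms(2) unfolding prime_radical_def prime_hyperideal_def
    by blast
qed

end

theorem mainTheorem4:
  fixes M :: "'a::ab_group_add \<Rightarrow> 'a \<Rightarrow> 'a set"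
    and \<alpha> :: "'a \<Rightarrow> 'a"
    and I :: "'a set"
  assumes "mult_hyperring M"
    and "hcomm M"
    and "has_identity M"
    and "\<forall>J. hyperideal M J \<longrightarrow> C_hyperideal M J"
    and "good_endo M \<alpha>"
    and "alpha_prime M \<alpha> I"
  shows "alpha_prime M \<alpha> (prime_radical M I)"
proof -
  interpret comm_hyperring M
    using assms(1,2) by unfold_locales
  have hI: "hyperideal M I"
    using assms(6) unfolding alpha_prime_def by blast
  note radical = mem_prime_radical_iff[OF hI assms(4)]
  have "\<alpha> y \<in> prime_radical M I" if xy: "M x y \<subseteq> prime_radical M I"
    and x: "x \<notin> prime_radical M I" for x y
  proof -
    obtain z where "z \<in> M x y"
      using hmult_nonempty by blast
    with xy have "z \<in> prime_radical M I"
      by blast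
    then obtain k w where "w \<in> hpower M z k" "w \<in> I"
      unfolding radical by blast
    then obtain a b where ab: "a \<in> hpower M x k" "b \<in> hpower M y k" "w \<in> M a b"
      using hpower_of_hmult[OF \<open>z \<in> M x y\<close>] by blast
    have "M a b \<subseteq> I"
      using C_hyperideal_hmult_subset[of M I a b] assms(4) hI ab(3) \<open>w \<in> I\<close> by blast
    moreover have "a \<notin> I"
      using ab(1) x unfolding radical by blast
    ultimately have "\<alpha> b \<in> I"
      using alpha_primeD[OF assms(6)] by blast
    moreover have "\<alpha> b \<in> hpower M (\<alpha> y) k"
      using image_hpower[OF assms(5), of y k] ab(2) by blast
    ultimately show ?thesis
      unfolding radical by blast
  qed
  then show ?thesis
    unfolding alpha_prime_def using hyperideal_prime_radical by blast
qed

end
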